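(* Let $q$ be a prime power and let $M$ be a $2\times 2$ matrix over $\mathbb{F}_{q^2}$ having a unique eigenvalue $c$, whose eigenspace is one-dimensional and generated by an eigenvector $u\in\mathbb{F}_{q^2}^2$ with $\langle u,u\rangle\neq 0$. Then $0\notin\mathrm{Num}'_0(M)$. If $q$ is even, then $\mathrm{Num}'_0(M)=\mathbb{F}_{q^2}^*$. If $q$ is odd, then $\sharp(\mathrm{Num}'_0(M))=(q^2-1)/2$.
   Context: The Hermitian form on $\mathbb{F}_{q^2}^n$ is $\langle u,v\rangle=\sum_i u_i^q v_i$. For an $n\times n$ matrix $M$ over $\mathbb{F}_{q^2}$ with $n\ge 2$, $\mathrm{Num}'_0(M)=\{\langle u,Mu\rangle: u\in\mathbb{F}_{q^2}^n\setminus\{0\},\ \langle u,u\rangle=0\}$. *)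

theory Defs
  imports "HOL-Analysis.Finite_Cartesian_Product" "HOL-Computational_Algebra.Primes"
begin

definition herm :: "nat \<Rightarrow> ('a::comm_ring_1) ^ 'n \<Rightarrow> 'a ^ 'n \<Rightarrow> 'a" where
  "herm q u v = (\<Sum>i\<in>UNIV. (u $ i) ^ q * v $ i)"

definition Num0' :: "nat \<Rightarrow> ('a::comm_ring_1) ^ 'n ^ 'n \<Rightarrow> 'a set" where
  "Num0' q M = {herm q u (M *v u) | u. u \<noteq> 0 \<and> herm q u u = 0}"

definition prime_power :: "nat \<Rightarrow> bool" where
  "prime_power q \<longleftrightarrow> (\<exists>p k. prime p \<and> k > 0 \<and> q = p ^ k)"

definition mat_eigenvalues :: "('a::field) ^ 'n ^ 'n \<Rightarrow> 'a set" where
  "mat_eigenvalues M = {c. \<exists>v. v \<noteq> 0 \<and> M *v v = c *s v}"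

definition mat_eigenspace :: "('a::field) ^ 'n ^ 'n \<Rightarrow> 'a \<Rightarrow> ('a ^ 'n) set" where
  "mat_eigenspace M c = {v. M *v v = c *s v}"

end

theory Submission
  imports Defs "HOL-Analysis.Determinants" "HOL-Computational_Algebra.Polynomial"
    "HOL-Number_Theory.Residues"
begin

text \<open>Put \<open>w = (u\<^sub>2\<^sup>q, -u\<^sub>1\<^sup>q)\<close>, which spans the orthogonal complement of \<open>u\<close>. Since
  \<open>c\<close> is the only eigenvalue of the \<open>2 \<times> 2\<close> matrix \<open>M\<close>, \<open>(M - c)\<^sup>2 = 0\<close>, so
  \<open>M w = c w + \<gamma> u\<close> with \<open>\<gamma> \<noteq> 0\<close> because the eigenspace is the line through \<open>u\<close>.
  For \<open>v = a u + b w\<close> one gets \<open>\<langle>v,v\<rangle> = (a\<^sup>q a + b\<^sup>q b) \<langle>u,u\<rangle>\<close>, and for isotropic \<open>v\<close>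
  \<open>\<langle>v,Mv\<rangle> = \<gamma> \<langle>u,u\<rangle> a\<^sup>q b\<close>. Hence \<open>Num'\<^sub>0(M)\<close> is a nonzero multiple of the set
  \<open>W\<close> of products \<open>a\<^sup>q b\<close> with \<open>b \<noteq> 0\<close> and \<open>a\<^sup>q a + b\<^sup>q b = 0\<close>. In characteristic 2
  every \<open>y = s\<^sup>2 \<noteq> 0\<close> lies in \<open>W\<close>, witnessed by \<open>a = s\<^sup>q, b = s\<close>. For odd \<open>q\<close> pick
  \<open>t\<close> with \<open>t\<^sup>q\<^sup>+\<^sup>1 = -1\<close>; then \<open>W\<close> is \<open>t\<^sup>q\<close> times the group of nonzero squares,
  which has \<open>(q\<^sup>2 - 1)/2\<close> elements.\<close>

section \<open>Finite fields\<close>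

lemma finite_field_power_card: "(x::'a::{field,finite}) ^ CARD('a) = x"
proof (cases "x = 0")
  case False
  have "x * (\<Prod>y\<in>UNIV-{0}. x * y) = x * x ^ (CARD('a) - 1) * \<Prod>(UNIV-{0::'a})"
    by (simp add: prod.distrib mult_ac)
  also have "x * x ^ (CARD('a) - 1) = x ^ CARD('a)"
    by (metis finite_UNIV_card_ge_0 finite power_eq_if zero_less_iff_neq_zero)
  also have "(\<Prod>y\<in>UNIV-{0}. x * y) = (\<Prod>y\<in>UNIV-{0::'a}. y)"
    by (rule prod.reindex_bij_witness[of _ "\<lambda>y. y / x" "\<lambda>y. x * y"]) (use False in auto)
  finally show ?thesis
    by simp
qed simp

lemma finite_field_power_card_minus_one:
  assumes "(x::'a::{field,finite}) \<noteq> 0"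
  shows "x ^ (CARD('a) - 1) = 1"
proof -
  have "x * x ^ (CARD('a) - 1) = x * 1"
    by (metis finite_field_power_card finite_UNIV_card_ge_0 finite mult_1_right power_eq_if
        zero_less_iff_neq_zero)
  then show ?thesis
    using assms by simp
qed

lemma two_le_CARD_field: "2 \<le> CARD('a::{field,finite})"
proof -
  have "card {0, 1::'a} \<le> CARD('a)"
    by (intro card_mono) auto
  then show ?thesis
    by simp
qed

lemma image_mult_left_nonzero:
  assumes "(g::'a::field) \<noteq> 0"
  shows "(\<lambda>x. g * x) ` (UNIV - {0}) = UNIV - {0}"
proof (intro equalityI subsetI)
  fix y :: 'a
  assume "y \<in> UNIV - {0}"
  then show "y \<in> (\<lambda>x. g * x) ` (UNIV - {0})"
    using assms by (intro image_eqI[of _ _ "y / g"]) auto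
qed (use assms in auto)

lemma card_power_eq_le:
  fixes d :: "'a::idom"
  assumes "m \<ge> 1"
  shows "card {x. x ^ m = d} \<le> m"
proof -
  let ?p = "Polynomial.monom 1 m + [:- d:]"
  have deg: "degree ?p = m"
    using assms by (subst degree_add_eq_left) (auto simp: degree_monom_eq)
  then have "?p \<noteq> 0"
    using assms by auto
  moreover have "{x. poly ?p x = 0} = {x. x ^ m = d}"
    by (auto simp: poly_monom add_eq_0_iff2)
  ultimately show ?thesis
    using card_poly_roots_bound deg by metis
qed

text \<open>Counting argument: the fibres of \<open>x \<mapsto> x ^ m\<close> have at most \<open>m\<close> elements and the
  roots of unity of order \<open>k\<close> at most \<open>k\<close>, which forces equality throughout.\<close>
lemma roots_of_unity_eq_power_image:
  assumes "m \<ge> 1" "k \<ge> 1" "m * k = CARD('a::{field,finite}) - 1"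
  shows "(\<lambda>x. x ^ m) ` (UNIV - {0::'a}) = {d. d ^ k = 1}"
    and "card {d::'a. d ^ k = 1} = k"
proof -
  let ?I = "(\<lambda>x. x ^ m) ` (UNIV - {0::'a})"
  let ?R = "{d::'a. d ^ k = 1}"
  have sub: "?I \<subseteq> ?R"
    using finite_field_power_card_minus_one assms(3) by (auto simp flip: power_mult)
  have "m * k = card (UNIV - {0::'a})"
    using assms(3) by (simp add: card_Diff_singleton)
  also have "\<dots> \<le> card (\<Union>d\<in>?I. {x. x ^ m = d})"
    by (intro card_mono) auto
  also have "\<dots> \<le> (\<Sum>d\<in>?I. card {x::'a. x ^ m = d})"
    by (rule card_UN_le) auto
  also have "\<dots> \<le> (\<Sum>d\<in>?I. m)"
    by (intro sum_mono card_power_eq_le assms(1))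
  finally have "k \<le> card ?I"
    using assms(1) by (simp add: mult.commute)
  moreover have "card ?I \<le> card ?R"
    by (intro card_mono sub) auto
  moreover have "card ?R \<le> k"
    using card_power_eq_le[OF assms(2), of 1] by simp
  ultimately have "card ?I = card ?R" "card ?R = k"
    by linarith+
  then show "?I = ?R" "card ?R = k"
    using card_subset_eq[OF _ sub] by auto
qed

lemma CHAR_eq_of_CARD_eq_prime_power:
  assumes "prime p" "n > 0" "CARD('a::{field,finite}) = p ^ n"
  shows "CHAR('a) = p"
proof -
  have "prime CHAR('a)"
    by (simp add: finite_imp_CHAR_pos prime_CHAR_semidom)
  moreover have "CHAR('a) dvd p ^ n"
    using CHAR_dvd_CARD assms(3) by metis
  ultimately show ?thesis
    using assms(1) by (metis prime_dvd_power primes_dvd_imp_eq)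
qed

lemma nonzero_squares_eq_roots_of_unity:
  assumes "odd CARD('a::{field,finite})"
  shows "(\<lambda>s. s ^ 2) ` (UNIV - {0::'a}) = {d. d ^ ((CARD('a) - 1) div 2) = 1}"
    and "card {d::'a. d ^ ((CARD('a) - 1) div 2) = 1} = (CARD('a) - 1) div 2"
proof -
  have "3 \<le> CARD('a)"
    using assms two_le_CARD_field[where 'a = 'a] by presburger
  then have "1 \<le> (CARD('a) - 1) div 2" "2 * ((CARD('a) - 1) div 2) = CARD('a) - 1"
    using assms by auto
  then show "(\<lambda>s. s ^ 2) ` (UNIV - {0::'a}) = {d. d ^ ((CARD('a) - 1) div 2) = 1}"
    and "card {d::'a. d ^ ((CARD('a) - 1) div 2) = 1} = (CARD('a) - 1) div 2"
    using roots_of_unity_eq_power_image[of 2 "(CARD('a) - 1) div 2", where 'a = 'a] by simp_all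
qed

text \<open>The norm \<open>x \<mapsto> x\<^sup>q\<^sup>+\<^sup>1\<close> maps onto the \<open>(q - 1)\<close>-th roots of unity,
  which contain \<open>-1\<close> for odd \<open>q\<close>.\<close>
lemma exists_power_Suc_eq_minus_one:
  assumes "odd q" "CARD('a::{field,finite}) = q ^ 2"
  shows "\<exists>t::'a. t ^ (q + 1) = - 1"
proof -
  have "q \<noteq> 1"
    using assms(2) two_le_CARD_field[where 'a = 'a] by auto
  with assms(1) have "3 \<le> q"
    by presburger
  then have "(\<lambda>x. x ^ (q + 1)) ` (UNIV - {0::'a}) = {d. d ^ (q - 1) = 1}"
    using assms(2) by (intro roots_of_unity_eq_power_image) (auto simp: power2_eq_square algebra_simps)
  moreover have "(- 1::'a) ^ (q - 1) = 1"
    using assms(1) by simp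
  ultimately show ?thesis
    by (metis (mono_tags, lifting) imageE mem_Collect_eq)
qed

lemma power_power_eq_self_of_CARD:
  assumes "CARD('a::{field,finite}) = q ^ 2"
  shows "((x::'a) ^ q) ^ q = x"
  using finite_field_power_card[of x] assms by (simp add: power2_eq_square flip: power_mult)

lemma power_add_of_CARD_prime_power:
  assumes "prime_power q" "CARD('a::{field,finite}) = q ^ 2"
  shows "((x::'a) + y) ^ q = x ^ q + y ^ q"
proof -
  obtain p k where "prime p" "k > 0" "q = p ^ k"
    using assms(1) unfolding prime_power_def by blast
  moreover have "CHAR('a) = p"
    using CHAR_eq_of_CARD_eq_prime_power[of p "k * 2"] assms(2) \<open>prime p\<close> \<open>k > 0\<close> \<open>q = p ^ k\<close>
    by (simp add: power_mult)
  ultimately show ?thesis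
    by (intro freshmans_dream') simp_all
qed

lemma power_uminus_of_additive:
  fixes x :: "'a::ring_1"
  assumes "q > 0" and add: "\<And>x y::'a. (x + y) ^ q = x ^ q + y ^ q"
  shows "(- x) ^ q = - (x ^ q)"
proof -
  have "(- x) ^ q + x ^ q = 0"
    using add[of "- x" x] assms(1) by (simp add: zero_power)
  then show ?thesis
    by (simp add: eq_neg_iff_add_eq_0)
qed

section \<open>The Hermitian form in dimension two\<close>

lemma herm_2: "herm q (x :: 'a::comm_ring_1 ^ 2) y = x$1 ^ q * y$1 + x$2 ^ q * y$2"
  by (simp add: herm_def sum_2)

lemma herm_right_linear: "herm q x (a *s y + b *s z) = a * herm q x y + b * herm q x z"
  by (simp add: herm_def algebra_simps sum.distrib sum_distrib_left)

lemma herm_left_semilinear: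
  assumes add: "\<And>x y::'a::comm_ring_1. (x + y) ^ q = x ^ q + y ^ q"
  shows "herm q (a *s x + b *s y) z = a ^ q * herm q x z + b ^ q * herm q (y :: 'a ^ 'n) z"
  by (simp add: herm_def add power_mult_distrib algebra_simps sum.distrib sum_distrib_left)

definition herm_orth :: "nat \<Rightarrow> 'a::comm_ring_1 ^ 2 \<Rightarrow> 'a ^ 2" where
  "herm_orth q u = vector [u$2 ^ q, - (u$1 ^ q)]"

lemma herm_orth_nth [simp]:
  "herm_orth q u $ 1 = u$2 ^ q" "herm_orth q u $ 2 = - (u$1 ^ q)"
  by (simp_all add: herm_orth_def)

lemma herm_herm_orth_right: "herm q u (herm_orth q u) = 0"
  by (simp add: herm_2 algebra_simps)

context
  fixes q :: nat and u :: "'a::field ^ 2"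
  assumes q: "q > 0"
    and add: "\<And>x y::'a. (x + y) ^ q = x ^ q + y ^ q"
    and involutive: "\<And>x::'a. (x ^ q) ^ q = x"
begin

lemma herm_herm_orth_left: "herm q (herm_orth q u) u = 0"
  by (simp add: herm_2 involutive power_uminus_of_additive[OF q add])

lemma herm_herm_orth_self: "herm q (herm_orth q u) (herm_orth q u) = herm q u u"
  by (simp add: herm_2 involutive power_uminus_of_additive[OF q add] algebra_simps)

end

lemma herm_orth_independent:
  fixes u :: "'a::field ^ 2"
  assumes "q > 0" "herm q u u \<noteq> 0" "a *s u + b *s herm_orth q u = 0"
  shows "a = 0 \<and> b = 0"
proof -
  have "a * herm q u u = 0"
    using arg_cong[OF assms(3), of "herm q u"]
    by (simp add: herm_right_linear herm_herm_orth_right) (simp add: herm_def)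
  then have "a = 0"
    using assms(2) by simp
  moreover have "b *s herm_orth q u = 0"
    using assms(3) \<open>a = 0\<close> by simp
  moreover have "herm_orth q u \<noteq> 0"
    using assms(1,2) by (auto simp: vec_eq_iff forall_2 herm_2)
  ultimately show ?thesis
    by simp
qed

lemma span_herm_orth:
  fixes u :: "'a::field ^ 2"
  assumes "herm q u u \<noteq> 0"
  shows "\<exists>a b. v = a *s u + b *s herm_orth q u"
proof -
  let ?\<alpha> = "herm q u u"
  have "?\<alpha> *s v = herm q u v *s u + (u$2 * v$1 - u$1 * v$2) *s herm_orth q u"
    by (simp add: vec_eq_iff forall_2 herm_2 algebra_simps)
  then have "v = inverse ?\<alpha> *s (herm q u v *s u + (u$2 * v$1 - u$1 * v$2) *s herm_orth q u)"
    using assms by (metis vector_smult_assoc left_inverse vector_smult_lid)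
  then show ?thesis
    by (simp only: vector_add_ldistrib vector_smult_assoc) blast
qed

section \<open>Matrices with a single eigenvalue\<close>

lemma cayley_hamilton_2:
  fixes A :: "'a::comm_ring_1 ^ 2 ^ 2"
  shows "A *v (A *v v) = (A$1$1 + A$2$2) *s (A *v v) - det A *s v"
  by (simp add: vec_eq_iff forall_2 matrix_vector_mult_def sum_2 det_2 algebra_simps)

lemma mat_matrix_vector_mult: "mat c *v v = c *s (v :: 'a::semiring_1 ^ 'n)"
  by (simp add: vec_eq_iff matrix_vector_mult_def mat_def if_distrib if_distribR cong: if_cong)

lemma unique_eigenvalue_2_sub_mem_eigenspace:
  fixes M :: "'a::field ^ 2 ^ 2"
  assumes "mat_eigenvalues M = {c}"
  shows "M *v w - c *s w \<in> mat_eigenspace M c"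
proof -
  define A where "A = M - mat c"
  define t where "t = A$1$1 + A$2$2"
  have A: "A *v v = M *v v - c *s v" for v
    by (simp add: A_def matrix_vector_mult_diff_rdistrib mat_matrix_vector_mult)
  obtain v where "v \<noteq> 0" "A *v v = 0"
    using assms by (auto simp: mat_eigenvalues_def A)
  then have "det A = 0"
    using cayley_hamilton_2[of A v] by simp
  then have At: "A *v (A *v w) = t *s (A *v w)"
    using cayley_hamilton_2[of A w] by (simp add: t_def)
  have "A *v (A *v w) = 0"
  proof (cases "A *v w = 0")
    case False
    have "M *v (A *v w) = (c + t) *s (A *v w)"
      using At by (simp add: A vector_sadd_rdistrib diff_eq_eq add.commute)
    then have "c + t \<in> mat_eigenvalues M"
      using False unfolding mat_eigenvalues_def by blast
    then show ?thesis
      using At assms by simp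
  qed simp
  then show ?thesis
    by (simp add: mat_eigenspace_def A)
qed

lemma herm_orth_shift_of_unique_eigenvalue:
  fixes M :: "'a::field ^ 2 ^ 2"
  assumes "q > 0" "mat_eigenvalues M = {c}" "mat_eigenspace M c = {a *s u | a. True}"
    and "herm q u u \<noteq> 0"
  obtains \<gamma> where "\<gamma> \<noteq> 0" "M *v herm_orth q u = c *s herm_orth q u + \<gamma> *s u"
proof -
  let ?w = "herm_orth q u"
  obtain \<gamma> where \<gamma>: "M *v ?w - c *s ?w = \<gamma> *s u"
    using unique_eigenvalue_2_sub_mem_eigenspace[OF assms(2), of ?w] assms(3) by blast
  have "\<gamma> \<noteq> 0"
  proof
    assume "\<gamma> = 0"
    then have "?w \<in> mat_eigenspace M c"
      using \<gamma> by (simp add: mat_eigenspace_def)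
    then obtain a where "?w = a *s u"
      using assms(3) by auto
    then have "a *s u + (- 1) *s ?w = 0"
      by (simp add: vector_smult_lneg)
    then show False
      using herm_orth_independent[OF assms(1,4), of a "- 1"] by simp
  qed
  with \<gamma> show ?thesis
    using that by (simp add: diff_eq_eq add.commute)
qed

lemma herm_in_herm_orth_basis:
  fixes M :: "'a::field ^ 2 ^ 2"
  assumes q: "q > 0"
    and add: "\<And>x y::'a. (x + y) ^ q = x ^ q + y ^ q"
    and involutive: "\<And>x::'a. (x ^ q) ^ q = x"
    and Mu: "M *v u = c *s u"
    and Mw: "M *v herm_orth q u = c *s herm_orth q u + \<gamma> *s u"
  fixes a b :: 'a
  defines "v \<equiv> a *s u + b *s herm_orth q u"
  shows "herm q v v = (a ^ q * a + b ^ q * b) * herm q u u"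
    and "herm q v (M *v v) = c * herm q v v + \<gamma> * herm q u u * (a ^ q * b)"
proof -
  let ?w = "herm_orth q u"
  have orth: "herm q u ?w = 0" "herm q ?w u = 0" "herm q ?w ?w = herm q u u"
    using herm_herm_orth_right herm_herm_orth_left[OF q add involutive]
      herm_herm_orth_self[OF q add involutive] by simp_all
  show "herm q v v = (a ^ q * a + b ^ q * b) * herm q u u"
    by (simp add: v_def herm_left_semilinear[OF add] herm_right_linear orth algebra_simps)
  have "M *v v = c *s v + (b * \<gamma>) *s u"
    by (simp add: v_def matrix_vector_right_distrib vector_scalar_commute Mu Mw
        vector_add_ldistrib vector_smult_assoc algebra_simps)
  moreover have "herm q v u = a ^ q * herm q u u"
    by (simp add: v_def herm_left_semilinear[OF add] orth)
  ultimately show "herm q v (M *v v) = c * herm q v v + \<gamma> * herm q u u * (a ^ q * b)"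
    by (simp add: herm_right_linear)
qed

section \<open>Isotropic products\<close>

definition isotropic_products :: "nat \<Rightarrow> 'a::comm_ring_1 set" where
  "isotropic_products q = {a ^ q * b | a b. b \<noteq> 0 \<and> a ^ q * a + b ^ q * b = 0}"

lemma Num0'_eq_image_isotropic_products:
  fixes M :: "'a::field ^ 2 ^ 2"
  assumes q: "q > 0"
    and add: "\<And>x y::'a. (x + y) ^ q = x ^ q + y ^ q"
    and involutive: "\<And>x::'a. (x ^ q) ^ q = x"
    and eigenvalues: "mat_eigenvalues M = {c}"
    and eigenspace: "mat_eigenspace M c = {a *s u | a. True}"
    and hu: "herm q u u \<noteq> 0"
  shows "\<exists>g. g \<noteq> 0 \<and> Num0' q M = (\<lambda>x. g * x) ` isotropic_products q"
proof -
  let ?w = "herm_orth q u"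
  let ?\<alpha> = "herm q u u"
  have Mu: "M *v u = c *s u"
    using eigenspace unfolding mat_eigenspace_def by (metis (mono_tags) mem_Collect_eq vector_smult_lid)
  obtain \<gamma> where "\<gamma> \<noteq> 0" and Mw: "M *v ?w = c *s ?w + \<gamma> *s u"
    using herm_orth_shift_of_unique_eigenvalue[OF q eigenvalues eigenspace hu] by blast
  note herm_values = herm_in_herm_orth_basis[OF q add involutive Mu Mw]
  have independent: "a *s u + b *s ?w = 0 \<longleftrightarrow> a = 0 \<and> b = 0" for a b
    using herm_orth_independent[OF q hu] by auto
  have "Num0' q M = (\<lambda>x. \<gamma> * ?\<alpha> * x) ` isotropic_products q"
  proof (intro equalityI subsetI)
    fix x
    assume "x \<in> Num0' q M"
    then obtain v where v: "x = herm q v (M *v v)" "v \<noteq> 0" "herm q v v = 0"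
      unfolding Num0'_def by blast
    obtain a b where ab: "v = a *s u + b *s ?w"
      using span_herm_orth[OF hu, of v] by blast
    have iso: "a ^ q * a + b ^ q * b = 0"
      using herm_values(1)[of a b] v(3) hu by (simp add: ab)
    moreover have "b \<noteq> 0"
      using iso v(2) independent[of a b] by (auto simp: ab)
    ultimately show "x \<in> (\<lambda>x. \<gamma> * ?\<alpha> * x) ` isotropic_products q"
      using herm_values[of a b] v(1) unfolding isotropic_products_def ab by auto
  next
    fix x
    assume "x \<in> (\<lambda>x. \<gamma> * ?\<alpha> * x) ` isotropic_products q"
    then obtain a b where "x = \<gamma> * ?\<alpha> * (a ^ q * b)" "b \<noteq> 0" "a ^ q * a + b ^ q * b = 0"
      unfolding isotropic_products_def by blast
    then show "x \<in> Num0' q M"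
      using herm_values[of a b] independent[of a b] unfolding Num0'_def by force
  qed
  moreover have "\<gamma> * ?\<alpha> \<noteq> 0"
    using \<open>\<gamma> \<noteq> 0\<close> hu by simp
  ultimately show ?thesis
    by blast
qed

lemma zero_notin_isotropic_products:
  assumes "q > 0"
  shows "(0::'a::idom) \<notin> isotropic_products q"
  using assms by (auto simp: isotropic_products_def zero_power)

lemma isotropic_products_CHAR_2:
  assumes "CHAR('a::{field,finite}) = 2" "CARD('a) = q ^ 2"
  shows "isotropic_products q = UNIV - {0::'a}"
proof (intro equalityI subsetI)
  have "q > 0"
    using two_le_CARD_field[where 'a = 'a] assms(2) by (cases q) auto
  then show "x \<in> UNIV - {0}" if "x \<in> isotropic_products q" for x :: 'a
    using that zero_notin_isotropic_products by blast
next
  fix y :: 'a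
  assume "y \<in> UNIV - {0}"
  have "CARD('a) div 2 + CARD('a) div 2 = CARD('a)"
    using CHAR_dvd_CARD[where 'a = 'a] assms(1) by auto
  then obtain s :: 'a where s: "s * s = y"
    using finite_field_power_card[of y] by (metis power_add)
  have "s ^ q * s + s ^ q * s = 0"
    using uminus_CHAR_2[OF assms(1), of "s ^ q * s"] by (metis add.right_inverse)
  then have "(s ^ q) ^ q * s ^ q + s ^ q * s = 0"
    by (simp add: power_power_eq_self_of_CARD[OF assms(2)] mult.commute)
  moreover have "(s ^ q) ^ q * s = y" "s \<noteq> 0"
    using s \<open>y \<in> UNIV - {0}\<close> by (auto simp: power_power_eq_self_of_CARD[OF assms(2)])
  ultimately show "y \<in> isotropic_products q"
    unfolding isotropic_products_def by blast
qed

text \<open>An element \<open>t\<close> of norm \<open>-1\<close> turns \<open>a\<^sup>q a + b\<^sup>q b = 0\<close> into \<open>(a / (t b))\<^sup>q\<^sup>+\<^sup>1 = 1\<close>.\<close>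
lemma isotropic_products_odd:
  assumes "odd q" "CARD('a::{field,finite}) = q ^ 2" "(t::'a) ^ (q + 1) = - 1"
  shows "isotropic_products q = (\<lambda>y. t ^ q * y) ` ((\<lambda>s. s ^ 2) ` (UNIV - {0}))"
proof (intro equalityI subsetI)
  have t: "t ^ q * t = - 1"
    using assms(3) by (simp add: mult.commute)
  fix x :: 'a
  assume "x \<in> isotropic_products q"
  then obtain a b where ab: "x = a ^ q * b" "b \<noteq> 0" "a ^ q * a + b ^ q * b = 0"
    unfolding isotropic_products_def by blast
  have "t \<noteq> 0"
    using t by auto
  obtain h where h: "q = 2 * h + 1"
    using assms(1) oddE by blast
  define K where "K = (CARD('a) - 1) div 2"
  have K: "q * K = (q + 1) * (q * h)" "(q + 1) * K = (CARD('a) - 1) * (h + 1)"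
    using assms(2) h by (simp_all add: K_def power2_eq_square algebra_simps)
  define r where "r = a / (t * b)"
  have "r ^ q * r = (a ^ q * a) / ((t ^ q * t) * (b ^ q * b))"
    by (simp add: r_def power_divide power_mult_distrib)
  also have "\<dots> = 1"
    using ab(2,3) t by (simp add: eq_neg_iff_add_eq_0 [symmetric])
  finally have r: "r ^ (q + 1) = 1"
    by (simp add: mult.commute)
  define y where "y = r ^ q * b ^ (q + 1)"
  have "y ^ K = (r ^ (q + 1)) ^ (q * h) * (b ^ (CARD('a) - 1)) ^ (h + 1)"
    unfolding y_def power_mult_distrib by (simp only: K flip: power_mult)
  then have "y ^ K = 1"
    using r finite_field_power_card_minus_one[OF ab(2)] by simp
  then have "y \<in> (\<lambda>s. s ^ 2) ` (UNIV - {0})"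
    using nonzero_squares_eq_roots_of_unity(1)[where 'a = 'a] assms(1,2) by (simp add: K_def)
  moreover have "x = t ^ q * y"
    using ab(1,2) \<open>t \<noteq> 0\<close> by (simp add: y_def r_def field_simps)
  ultimately show "x \<in> (\<lambda>y. t ^ q * y) ` ((\<lambda>s. s ^ 2) ` (UNIV - {0}))"
    by blast
next
  fix x
  assume "x \<in> (\<lambda>y. t ^ q * y) ` ((\<lambda>s. s ^ 2) ` (UNIV - {0}))"
  then obtain s where s: "s \<noteq> 0" "x = t ^ q * s ^ 2"
    by auto
  have aq: "(t * s ^ q) ^ q = t ^ q * s"
    by (simp add: power_mult_distrib power_power_eq_self_of_CARD[OF assms(2)])
  have "(t * s ^ q) ^ q * (t * s ^ q) + s ^ q * s = (t ^ q * t + 1) * (s ^ q * s)"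
    unfolding aq by (simp add: algebra_simps)
  also have "\<dots> = 0"
    using assms(3) by (simp add: mult.commute)
  finally have "(t * s ^ q) ^ q * (t * s ^ q) + s ^ q * s = 0" .
  moreover have "x = (t * s ^ q) ^ q * s"
    using s aq by (simp add: power2_eq_square mult.assoc)
  ultimately show "x \<in> isotropic_products q"
    unfolding isotropic_products_def using s(1) by blast
qed

lemma card_isotropic_products_odd:
  assumes "odd q" "CARD('a::{field,finite}) = q ^ 2"
  shows "card (isotropic_products q :: 'a set) = (q ^ 2 - 1) div 2"
proof -
  obtain t :: 'a where t: "t ^ (q + 1) = - 1"
    using exists_power_Suc_eq_minus_one assms by blast
  then have "t \<noteq> 0"
    by auto
  then have "card (isotropic_products q :: 'a set) = card ((\<lambda>s. s ^ 2) ` (UNIV - {0::'a}))"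
    unfolding isotropic_products_odd[OF assms t] by (intro card_image) (auto simp: inj_on_def)
  also have "\<dots> = (q ^ 2 - 1) div 2"
    using nonzero_squares_eq_roots_of_unity[where 'a = 'a] assms by simp
  finally show ?thesis .
qed

theorem proposition2:
  fixes q :: nat and M :: "('a::{field,finite}) ^ 2 ^ 2" and c :: 'a and u :: "'a ^ 2"
  assumes "prime_power q"
    and "CARD('a) = q ^ 2"
    and "mat_eigenvalues M = {c}"
    and "u \<noteq> 0"
    and "mat_eigenspace M c = {a *s u | a. True}"
    and "herm q u u \<noteq> 0"
  shows "0 \<notin> Num0' q M
    \<and> (even q \<longrightarrow> Num0' q M = UNIV - {0})
    \<and> (odd q \<longrightarrow> card (Num0' q M) = (q ^ 2 - 1) div 2)"
proof -
  obtain p k where pk: "prime p" "k > 0" "q = p ^ k"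
    using assms(1) unfolding prime_power_def by blast
  then have "q > 0"
    by (simp add: prime_gt_0_nat)
  obtain g where g: "g \<noteq> 0" "Num0' q M = (\<lambda>x. g * x) ` isotropic_products q"
    using Num0'_eq_image_isotropic_products[OF \<open>q > 0\<close> power_add_of_CARD_prime_power[OF assms(1,2)]
        power_power_eq_self_of_CARD[OF assms(2)] assms(3,5,6)] by blast
  have "0 \<notin> Num0' q M"
    using g zero_notin_isotropic_products[OF \<open>q > 0\<close>] by auto
  moreover have "Num0' q M = UNIV - {0}" if "even q"
  proof -
    have "p = 2"
      using that pk by (metis even_power primes_dvd_imp_eq two_is_prime_nat)
    then have "CHAR('a) = 2"
      using CHAR_eq_of_CARD_eq_prime_power[of 2 "k * 2"] assms(2) pk by (simp add: power_mult)
    then show ?thesis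
      using g isotropic_products_CHAR_2[OF _ assms(2)] image_mult_left_nonzero by simp
  qed
  moreover have "card (Num0' q M) = (q ^ 2 - 1) div 2" if "odd q"
    using g card_isotropic_products_odd[OF that assms(2)]
    by (simp add: card_image inj_on_def)
  ultimately show ?thesis
    by blast
qed

end
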